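(* Let $\Sigma$, $\mathcal I$, $P$ and $R(\cdot)$ be as follows: $\Sigma\subseteq\mathcal L_\Diamond$ is finite and closed under subformulas; $\mathcal I$ is a finite weak $\Sigma$-quasimodel such that for every deterministic weak $\mathcal L_\Diamond$-quasimodel $\mathcal A$ the relation $\rightharpoonup\ \subseteq|\mathcal I|\times|\mathcal A|$ is a surjective dynamic simulation; $P=\{w\in|\mathcal I|:\not\vdash\mathrm{Sim}(w)\}$; and $R(w)$ is the set of $v\in P$ reachable from $w$ by a finite $S_{\mathcal I}$-path all of whose elements lie in $P$. If $w\in P$ and $\Diamond\psi\in\ell^+(w)$, then there is $v\in R(w)$ with $\psi\in\ell^+(v)$.
   Context: $\mathcal L_\Diamond$ is the propositional language with $\bot,\wedge,\vee,\to$ and unary modalities $\bigcirc$, $\Diamond$. ${\sf ITL}^0_\Diamond$ is axiomatized by all intuitionistic propositional tautologies, $\neg\bigcirc\bot$, $\bigcirc\varphi\wedge\bigcirc\psi\to\bigcirc(\varphi\wedge\psi)$, $\bigcirc(\varphi\vee\psi)\to\bigcirc\varphi\vee\bigcirc\psi$, $\bigcirc(\varphi\to\psi)\to(\bigcirc\varphi\to\bigcirc\psi)$, $\varphi\vee\bigcirc\Diamond\varphi\to\Diamond\varphi$, closed under modus ponens and the rules $\varphi/\bigcirc\varphi$, $(\varphi\to\psi)/(\Diamond\varphi\to\Diamond\psi)$, $(\bigcirc\varphi\to\varphi)/(\Diamond\varphi\to\varphi)$; $\vdash\varphi$ means $\varphi\in{\sf ITL}^0_\Diamond$. A path $u_0,\dots,u_n$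 ($n\ge0$) is an $S_{\mathcal I}$-path if $u_i\,S_{\mathcal I}\,u_{i+1}$ for $i<n$. Types: a $\Sigma$-type is a pair $\Phi=(\Phi^-;\Phi^+)$ of subsets of $\Sigma$ with $\Phi^-\cap\Phi^+=\varnothing$, $\Phi^-\cup\Phi^+=\Sigma$, $\bot\notin\Phi^+$, $\wedge,\vee$ in $\Phi^+$ behaving classically, ($\varphi\to\psi\in\Phi^+\Rightarrow\varphi\in\Phi^-$ or $\psi\in\Phi^+$), ($\Diamond\varphi\in\Phi^-\Rightarrow\varphi\in\Phi^-$). $\Phi\preccurlyeq_T\Psi$ iff $\Phi^+\subseteq\Psi^+$; $\Phi\subseteq_T\Psi$ iff $\Phi^-\subseteq\Psi^-$, $\Phi^+\subseteq\Psi^+$. $\Phi\,S_T\,\Psi$ iff: $\bigcirc\varphi\in\Phi^+\Rightarrow\varphi\in\Psi^+$; $\bigcirc\varphi\in\Phi^-\Rightarrow\varphi\in\Psi^-$; ($\Diamond\varphi\in\Phi^+$, $\varphi\in\Phi^-$)$\Rightarrow\Diamond\varphi\in\Psi^+$; $\Diamond\varphi\in\Phi^-\Rightarrow\Diamond\varphi\in\Psi^-$. A $\Sigma$-labelled frame is $(W,\preccurlyeq,\ell)$, $\preccurlyeq$ a partial order, $\ell$ mapping to $\Sigma$-types, monotone w.r.t. $\preccurlyeq_T$, and if $\varphi\to\psi\in\ell^-(w)$ then some $v\succcurlyeq w$ has $\varphi\in\ell^+(v)$, $\psi\in\ell^-(v)$. A weak $\Sigma$-quasimodel adds $S\subseteq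 W\times W$ forward-confluent (if $w\preccurlyeq w'$, $w\,S\,v$ then some $v'\succcurlyeq v$ has $w'\,S\,v'$) and sensible ($w\,S\,v\Rightarrow\ell(w)\,S_T\,\ell(v)$); deterministic if $S$ is a function. A simulation from a $\Sigma$-labelled $\mathcal X$ to a $\Delta$-labelled $\mathcal Y$ ($\Sigma\subseteq\Delta$) is a forward-confluent $E\subseteq|\mathcal X|\times|\mathcal Y|$ with $x\,E\,y\Rightarrow\ell(x)\subseteq_T\ell(y)$; $x\rightharpoonup y$ iff some simulation relates them; $E$ is dynamic if $x\,E\,y$ and $y\,S\,y'$ imply some $x'$ with $x\,S\,x'$, $x'\,E\,y'$; surjective if every point of $\mathcal A$ is in its range. $\mathrm{Sim}(w)=\bigwedge\ell^+(w)\to\big(\bigvee\ell^-(w)\vee\bigvee_{v\succ w}\mathrm{Sim}(v)\big)$, defined by backwards induction on $\prec$ ($\bigwedge\varnothing=\top$, $\bigvee\varnothing=\bot$). *)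

theory Defs
  imports Main
begin

datatype fm =
    Var nat
  | Bot
  | And fm fm
  | Or fm fm
  | Imp fm fm
  | Next fm
  | Dia fm

definition Top :: fm where "Top = Imp Bot Bot"
definition Neg :: "fm \<Rightarrow> fm" where "Neg \<phi> = Imp \<phi> Bot"

fun subfms :: "fm \<Rightarrow> fm set" where
  "subfms (Var n) = {Var n}"
| "subfms Bot = {Bot}"
| "subfms (And a b) = insert (And a b) (subfms a \<union> subfms b)"
| "subfms (Or a b) = insert (Or a b) (subfms a \<union> subfms b)"
| "subfms (Imp a b) = insert (Imp a b) (subfms a \<union> subfms b)"
| "subfms (Next a) = insert (Next a) (subfms a)"
| "subfms (Dia a) = insert (Dia a) (subfms a)"

definition subfm_closed :: "fm set \<Rightarrow> bool" where
  "subfm_closed \<Sigma> \<longleftrightarrow> (\<forall>\<phi>\<in>\<Sigma>. subfms \<phi> \<subseteq> \<Sigma>)"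

text \<open>Intuitionistic propositional tautologies (all substitution instances in L_Diamond)
  are generated by a standard Hilbert-style axiomatisation of intuitionistic
  propositional logic together with modus ponens.\<close>

inductive ipc_axiom :: "fm \<Rightarrow> bool" where
  ax_K: "ipc_axiom (Imp a (Imp b a))"
| ax_S: "ipc_axiom (Imp (Imp a (Imp b c)) (Imp (Imp a b) (Imp a c)))"
| ax_conjE1: "ipc_axiom (Imp (And a b) a)"
| ax_conjE2: "ipc_axiom (Imp (And a b) b)"
| ax_conjI: "ipc_axiom (Imp a (Imp b (And a b)))"
| ax_disjI1: "ipc_axiom (Imp a (Or a b))"
| ax_disjI2: "ipc_axiom (Imp b (Or a b))"
| ax_disjE: "ipc_axiom (Imp (Imp a c) (Imp (Imp b c) (Imp (Or a b) c)))"
| ax_efq: "ipc_axiom (Imp Bot a)"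

inductive prov :: "fm \<Rightarrow> bool" where
  ipc: "ipc_axiom \<phi> \<Longrightarrow> prov \<phi>"
| next_bot: "prov (Neg (Next Bot))"
| next_and: "prov (Imp (And (Next a) (Next b)) (Next (And a b)))"
| next_or: "prov (Imp (Next (Or a b)) (Or (Next a) (Next b)))"
| next_imp: "prov (Imp (Next (Imp a b)) (Imp (Next a) (Next b)))"
| dia_fix: "prov (Imp (Or a (Next (Dia a))) (Dia a))"
| mp: "prov (Imp a b) \<Longrightarrow> prov a \<Longrightarrow> prov b"
| nec: "prov a \<Longrightarrow> prov (Next a)"
| dia_mono: "prov (Imp a b) \<Longrightarrow> prov (Imp (Dia a) (Dia b))"
| dia_ind: "prov (Imp (Next a) a) \<Longrightarrow> prov (Imp (Dia a) a)"

text \<open>A type is a pair (minus, plus).\<close>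

type_synonym ltype = "fm set \<times> fm set"

definition is_type :: "fm set \<Rightarrow> ltype \<Rightarrow> bool" where
  "is_type \<Sigma> \<Phi> \<longleftrightarrow> (let M = fst \<Phi>; P = snd \<Phi> in
     M \<subseteq> \<Sigma> \<and> P \<subseteq> \<Sigma> \<and> M \<inter> P = {} \<and> M \<union> P = \<Sigma> \<and> Bot \<notin> P \<and>
     (\<forall>a b. And a b \<in> \<Sigma> \<longrightarrow> (And a b \<in> P \<longleftrightarrow> a \<in> P \<and> b \<in> P)) \<and>
     (\<forall>a b. Or a b \<in> \<Sigma> \<longrightarrow> (Or a b \<in> P \<longleftrightarrow> a \<in> P \<or> b \<in> P)) \<and>
     (\<forall>a b. Imp a b \<in> P \<longrightarrow> a \<in> M \<or> b \<in> P) \<and>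
     (\<forall>a. Dia a \<in> M \<longrightarrow> a \<in> M))"

definition type_le :: "ltype \<Rightarrow> ltype \<Rightarrow> bool" where
  "type_le \<Phi> \<Psi> \<longleftrightarrow> snd \<Phi> \<subseteq> snd \<Psi>"

definition type_sub :: "ltype \<Rightarrow> ltype \<Rightarrow> bool" where
  "type_sub \<Phi> \<Psi> \<longleftrightarrow> fst \<Phi> \<subseteq> fst \<Psi> \<and> snd \<Phi> \<subseteq> snd \<Psi>"

definition type_S :: "ltype \<Rightarrow> ltype \<Rightarrow> bool" where
  "type_S \<Phi> \<Psi> \<longleftrightarrow>
     (\<forall>a. Next a \<in> snd \<Phi> \<longrightarrow> a \<in> snd \<Psi>) \<and>
     (\<forall>a. Next a \<in> fst \<Phi> \<longrightarrow> a \<in> fst \<Psi>) \<and>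
     (\<forall>a. Dia a \<in> snd \<Phi> \<and> a \<in> fst \<Phi> \<longrightarrow> Dia a \<in> snd \<Psi>) \<and>
     (\<forall>a. Dia a \<in> fst \<Phi> \<longrightarrow> Dia a \<in> fst \<Psi>)"

record 'w frame =
  carrier :: "'w set"
  leq :: "'w \<Rightarrow> 'w \<Rightarrow> bool"
  lab :: "'w \<Rightarrow> ltype"
  succ :: "'w \<Rightarrow> 'w \<Rightarrow> bool"

definition labelled_frame :: "fm set \<Rightarrow> 'w frame \<Rightarrow> bool" where
  "labelled_frame \<Sigma> F \<longleftrightarrow>
     (\<forall>w\<in>carrier F. leq F w w) \<and>
     (\<forall>u\<in>carrier F. \<forall>v\<in>carrier F. \<forall>w\<in>carrier F.
        leq F u v \<longrightarrow> leq F v w \<longrightarrow> leq F u w) \<and>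
     (\<forall>u\<in>carrier F. \<forall>v\<in>carrier F. leq F u v \<longrightarrow> leq F v u \<longrightarrow> u = v) \<and>
     (\<forall>w\<in>carrier F. is_type \<Sigma> (lab F w)) \<and>
     (\<forall>w\<in>carrier F. \<forall>v\<in>carrier F. leq F w v \<longrightarrow> type_le (lab F w) (lab F v)) \<and>
     (\<forall>w\<in>carrier F. \<forall>a b. Imp a b \<in> fst (lab F w) \<longrightarrow>
        (\<exists>v\<in>carrier F. leq F w v \<and> a \<in> snd (lab F v) \<and> b \<in> fst (lab F v)))"

definition weak_quasimodel :: "fm set \<Rightarrow> 'w frame \<Rightarrow> bool" where
  "weak_quasimodel \<Sigma> F \<longleftrightarrow> labelled_frame \<Sigma> F \<and>
     (\<forall>w v. succ F w v \<longrightarrow> w \<in> carrier F \<and> v \<in> carrier F) \<and>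
     (\<forall>w\<in>carrier F. \<forall>w'\<in>carrier F. \<forall>v. leq F w w' \<longrightarrow> succ F w v \<longrightarrow>
        (\<exists>v'\<in>carrier F. leq F v v' \<and> succ F w' v')) \<and>
     (\<forall>w v. succ F w v \<longrightarrow> type_S (lab F w) (lab F v))"

definition deterministic :: "'w frame \<Rightarrow> bool" where
  "deterministic F \<longleftrightarrow> (\<forall>w\<in>carrier F. \<exists>!v. succ F w v)"

definition simulation :: "'a frame \<Rightarrow> 'b frame \<Rightarrow> ('a \<Rightarrow> 'b \<Rightarrow> bool) \<Rightarrow> bool" where
  "simulation X Y E \<longleftrightarrow>
     (\<forall>x y. E x y \<longrightarrow> x \<in> carrier X \<and> y \<in> carrier Y \<and> type_sub (lab X x) (lab Y y)) \<and>
     (\<forall>x y x'. E x y \<longrightarrow> x' \<in> carrier X \<longrightarrow> leq X x x' \<longrightarrow>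
        (\<exists>y'\<in>carrier Y. leq Y y y' \<and> E x' y'))"

definition simulates :: "'a frame \<Rightarrow> 'b frame \<Rightarrow> 'a \<Rightarrow> 'b \<Rightarrow> bool" where
  "simulates X Y x y \<longleftrightarrow> (\<exists>E. simulation X Y E \<and> E x y)"

definition dynamic :: "'a frame \<Rightarrow> 'b frame \<Rightarrow> ('a \<Rightarrow> 'b \<Rightarrow> bool) \<Rightarrow> bool" where
  "dynamic X Y E \<longleftrightarrow>
     (\<forall>x y y'. E x y \<longrightarrow> succ Y y y' \<longrightarrow> (\<exists>x'. succ X x x' \<and> E x' y'))"

definition surjective :: "'a frame \<Rightarrow> 'b frame \<Rightarrow> ('a \<Rightarrow> 'b \<Rightarrow> bool) \<Rightarrow> bool" where
  "surjective X Y E \<longleftrightarrow> (\<forall>y\<in>carrier Y. \<exists>x. E x y)"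

definition big_conj :: "fm set \<Rightarrow> fm" where
  "big_conj S = foldr And (SOME xs. set xs = S) Top"

definition big_disj :: "fm set \<Rightarrow> fm" where
  "big_disj S = foldr Or (SOME xs. set xs = S) Bot"

text \<open>Sim by backwards induction on the strict order, realised with fuel; since the
  frame is finite, fuel card W is enough for every chain above w.\<close>

fun sim_fuel :: "'w frame \<Rightarrow> nat \<Rightarrow> 'w \<Rightarrow> fm" where
  "sim_fuel F 0 w = Imp (big_conj (snd (lab F w))) (Or (big_disj (fst (lab F w))) Bot)"
| "sim_fuel F (Suc n) w = Imp (big_conj (snd (lab F w)))
     (Or (big_disj (fst (lab F w)))
         (big_disj (sim_fuel F n ` {v \<in> carrier F. leq F w v \<and> v \<noteq> w})))"

definition Sim :: "'w frame \<Rightarrow> 'w \<Rightarrow> fm" where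
  "Sim F w = sim_fuel F (card (carrier F)) w"

definition Pset :: "'w frame \<Rightarrow> 'w set" where
  "Pset F = {w \<in> carrier F. \<not> prov (Sim F w)}"

definition is_S_path :: "'w frame \<Rightarrow> 'w list \<Rightarrow> bool" where
  "is_S_path F us \<longleftrightarrow> us \<noteq> [] \<and> (\<forall>i. Suc i < length us \<longrightarrow> succ F (us ! i) (us ! Suc i))"

definition Rset :: "'w frame \<Rightarrow> 'w \<Rightarrow> 'w set" where
  "Rset F w = {v \<in> Pset F. \<exists>us. is_S_path F us \<and> hd us = w \<and> last us = v \<and> set us \<subseteq> Pset F}"

end

theory Submission
  imports Defs
begin

text \<open>Prime theories of \<open>ITL\<^sup>0\<^sub>\<Diamond>\<close> form a deterministic weak quasimodel, the canonical
  model, and a prime theory \<open>T\<close> refutes \<open>Sim(u)\<close> exactly when \<open>u\<close> simulates into a point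
  of the canonical model extending \<open>T\<close>. Suppose \<open>\<psi>\<close> held nowhere in \<open>R(w)\<close>, and let \<open>\<chi>\<close> be
  the conjunction of all \<open>Sim(u)\<close>, \<open>u \<in> R(w)\<close>. Then \<open>\<psi> \<rightarrow> \<chi>\<close> is provable, and so is
  \<open>\<circle>\<chi> \<rightarrow> \<chi>\<close>, because the dynamic simulation carries a refutation of \<open>Sim(u)\<close> along
  the successor of a prime theory to a refutation of \<open>Sim(u')\<close> for an \<open>S\<close>-successor \<open>u'\<close>
  of \<open>u\<close>, which lies in \<open>P\<close> and hence in \<open>R(w)\<close>. The induction rule for \<open>\<Diamond>\<close> yields
  \<open>\<Diamond>\<psi> \<rightarrow> \<chi>\<close>. A prime theory refuting \<open>Sim(w)\<close> extends to a point simulating \<open>w\<close>;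
  it contains \<open>\<Diamond>\<psi>\<close>, hence \<open>\<chi>\<close>, hence \<open>Sim(w)\<close>, a contradiction.\<close>

inductive derives :: "fm set \<Rightarrow> fm \<Rightarrow> bool" for \<Gamma> where
  assm: "a \<in> \<Gamma> \<Longrightarrow> derives \<Gamma> a"
| ax: "prov a \<Longrightarrow> derives \<Gamma> a"
| mp: "derives \<Gamma> (Imp a b) \<Longrightarrow> derives \<Gamma> a \<Longrightarrow> derives \<Gamma> b"

lemma prov_K: "prov (Imp a (Imp b a))"
  by (intro prov.ipc ipc_axiom.intros)

lemma prov_S: "prov (Imp (Imp a (Imp b c)) (Imp (Imp a b) (Imp a c)))"
  by (intro prov.ipc ipc_axiom.intros)

lemma prov_Imp_refl: "prov (Imp a a)"
  using prov.mp[OF prov.mp[OF prov_S prov_K] prov_K] .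

lemma derives_deduction: "derives (insert a \<Gamma>) b \<Longrightarrow> derives \<Gamma> (Imp a b)"
proof (induction rule: derives.induct)
  case (assm c)
  show ?case
  proof (cases "c = a")
    case True
    then show ?thesis using prov_Imp_refl derives.ax by blast
  next
    case False
    with assm have "c \<in> \<Gamma>" by simp
    then show ?thesis using derives.mp[OF derives.ax[OF prov_K] derives.assm] by blast
  qed
next
  case (ax c)
  then show ?case using derives.mp[OF derives.ax[OF prov_K] derives.ax] by blast
next
  case (mp c d)
  then show ?case using derives.mp[OF derives.mp[OF derives.ax[OF prov_S]]] by blast
qed

lemma derives_mono: "derives \<Gamma> a \<Longrightarrow> \<Gamma> \<subseteq> \<Delta> \<Longrightarrow> derives \<Delta> a"
  by (induction rule: derives.induct) (auto intro: derives.intros)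

lemma derives_compact: "derives \<Gamma> a \<Longrightarrow> \<exists>F. finite F \<and> F \<subseteq> \<Gamma> \<and> derives F a"
proof (induction rule: derives.induct)
  case (assm a)
  then show ?case by (intro exI[of _ "{a}"]) (auto intro: derives.intros)
next
  case (ax a)
  then show ?case by (intro exI[of _ "{}"]) (auto intro: derives.intros)
next
  case (mp a b)
  then obtain F1 F2 where "finite F1" "F1 \<subseteq> \<Gamma>" "derives F1 (Imp a b)"
    and "finite F2" "F2 \<subseteq> \<Gamma>" "derives F2 a"
    by blast
  then show ?case by (intro exI[of _ "F1 \<union> F2"]) (auto intro: derives.mp derives_mono)
qed

lemma derives_empty_prov: "derives {} a \<Longrightarrow> prov a"
  by (induction rule: derives.induct) (auto intro: prov.mp)

definition prime_theory :: "fm set \<Rightarrow> bool" where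
  "prime_theory T \<longleftrightarrow> (\<forall>a. derives T a \<longrightarrow> a \<in> T) \<and> Bot \<notin> T \<and>
     (\<forall>a b. Or a b \<in> T \<longrightarrow> a \<in> T \<or> b \<in> T)"

lemma not_derives_Union_chain:
  assumes "subset.chain A C" "C \<noteq> {}" "\<And>\<Delta>. \<Delta> \<in> C \<Longrightarrow> \<not> derives \<Delta> b"
  shows "\<not> derives (\<Union>C) b"
proof
  assume "derives (\<Union>C) b"
  then obtain F where F: "finite F" "F \<subseteq> \<Union>C" "derives F b"
    using derives_compact by blast
  then obtain \<Delta> where "\<Delta> \<in> C" "F \<subseteq> \<Delta>"
    using finite_subset_Union_chain[OF F(1,2) assms(2,1)] by blast
  with F(3) assms(3) show False
    using derives_mono by blast
qed

text \<open>Lindenbaum's lemma: a maximal theory not deriving \<open>b\<close> is prime, because every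
  formula outside it implies \<open>b\<close>.\<close>

lemma prime_extension:
  assumes "\<not> derives \<Gamma> b"
  shows "\<exists>T. \<Gamma> \<subseteq> T \<and> prime_theory T \<and> b \<notin> T"
proof -
  define A where "A = {\<Delta>. \<Gamma> \<subseteq> \<Delta> \<and> \<not> derives \<Delta> b}"
  have "\<Union>C \<in> A" if "C \<noteq> {}" "subset.chain A C" for C
  proof -
    have "C \<subseteq> A" using that(2) by (simp add: subset_chain_def)
    then have "\<Gamma> \<subseteq> \<Union>C" "\<And>\<Delta>. \<Delta> \<in> C \<Longrightarrow> \<not> derives \<Delta> b"
      using that(1) by (auto simp: A_def)
    then show ?thesis
      using not_derives_Union_chain[OF that(2,1)] by (simp add: A_def)
  qed
  moreover have "\<Gamma> \<in> A" using assms by (simp add: A_def)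
  ultimately obtain M where "M \<in> A" and maximal: "\<forall>\<Delta>\<in>A. M \<subseteq> \<Delta> \<longrightarrow> \<Delta> = M"
    using subset_Zorn_nonempty[of A] by blast
  then have M: "\<Gamma> \<subseteq> M" "\<not> derives M b" by (auto simp: A_def)
  have outside: "derives M (Imp a b)" if "a \<notin> M" for a
  proof -
    have "insert a M \<notin> A" using maximal that by blast
    with M have "derives (insert a M) b" by (auto simp: A_def)
    then show ?thesis by (rule derives_deduction)
  qed
  have closed: "a \<in> M" if "derives M a" for a
    using that outside M(2) derives.mp by blast
  have "Bot \<notin> M"
    using M(2) derives.mp[OF derives.ax[OF prov.ipc[OF ipc_axiom.ax_efq]] derives.assm] by metis
  moreover have "a \<in> M \<or> c \<in> M" if "Or a c \<in> M" for a c
  proof (rule ccontr)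
    assume "\<not> (a \<in> M \<or> c \<in> M)"
    then have "derives M (Imp a b)" "derives M (Imp c b)" using outside by auto
    moreover have "derives M (Imp (Imp a b) (Imp (Imp c b) (Imp (Or a c) b)))"
      by (intro derives.ax prov.ipc ipc_axiom.intros)
    ultimately have "derives M b"
      using derives.mp derives.assm[OF that] by metis
    with M(2) show False ..
  qed
  moreover have "b \<notin> M" using M(2) derives.assm by blast
  ultimately show ?thesis
    using M(1) closed unfolding prime_theory_def by blast
qed

lemma prime_theory_prov: "prime_theory T \<Longrightarrow> prov a \<Longrightarrow> a \<in> T"
  unfolding prime_theory_def using derives.ax by blast

lemma prime_theory_mp: "prime_theory T \<Longrightarrow> Imp a b \<in> T \<Longrightarrow> a \<in> T \<Longrightarrow> b \<in> T"
  unfolding prime_theory_def using derives.mp derives.assm by metis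

lemma prime_theory_prov_mp: "prime_theory T \<Longrightarrow> prov (Imp a b) \<Longrightarrow> a \<in> T \<Longrightarrow> b \<in> T"
  using prime_theory_prov prime_theory_mp by blast

lemma prime_theory_Bot: "prime_theory T \<Longrightarrow> Bot \<notin> T"
  unfolding prime_theory_def by blast

lemma prime_theory_Top: "prime_theory T \<Longrightarrow> Top \<in> T"
  unfolding Top_def using prime_theory_prov prov_Imp_refl by blast

lemma prime_theory_And: "prime_theory T \<Longrightarrow> And a b \<in> T \<longleftrightarrow> a \<in> T \<and> b \<in> T"
  using prime_theory_prov_mp[OF _ prov.ipc[OF ipc_axiom.ax_conjE1]]
    prime_theory_prov_mp[OF _ prov.ipc[OF ipc_axiom.ax_conjE2]]
    prime_theory_mp[OF _ prime_theory_prov_mp[OF _ prov.ipc[OF ipc_axiom.ax_conjI]]]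
  by blast

lemma prime_theory_Or: "prime_theory T \<Longrightarrow> Or a b \<in> T \<longleftrightarrow> a \<in> T \<or> b \<in> T"
  using prime_theory_prov_mp[OF _ prov.ipc[OF ipc_axiom.ax_disjI1]]
    prime_theory_prov_mp[OF _ prov.ipc[OF ipc_axiom.ax_disjI2]]
  unfolding prime_theory_def by blast

lemma prime_theory_Imp_counterexample:
  assumes "prime_theory T" "Imp a b \<notin> T"
  shows "\<exists>T'. T \<subseteq> T' \<and> prime_theory T' \<and> a \<in> T' \<and> b \<notin> T'"
proof -
  have "\<not> derives T (Imp a b)"
    using assms unfolding prime_theory_def by blast
  then have "\<not> derives (insert a T) b"
    using derives_deduction by blast
  then obtain T' where "insert a T \<subseteq> T'" "prime_theory T'" "b \<notin> T'"
    using prime_extension by blast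
  then show ?thesis by blast
qed

lemma unprovable_prime_theory: "\<not> prov a \<Longrightarrow> \<exists>T. prime_theory T \<and> a \<notin> T"
  using prime_extension[of "{}" a] derives_empty_prov by blast

lemma prov_ImpI_prime_theory:
  assumes "\<And>T. prime_theory T \<Longrightarrow> a \<in> T \<Longrightarrow> b \<in> T"
  shows "prov (Imp a b)"
proof (rule ccontr)
  assume "\<not> prov (Imp a b)"
  then have "\<not> derives {a} b"
    using derives_deduction derives_empty_prov by blast
  then obtain T where "{a} \<subseteq> T" "prime_theory T" "b \<notin> T"
    using prime_extension by blast
  with assms show False by blast
qed

lemma set_some_list: "finite S \<Longrightarrow> set (SOME xs. set xs = S) = S"
  by (rule someI_ex, erule finite_list)

lemma big_conj_mem:
  assumes "finite S" "prime_theory T"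
  shows "big_conj S \<in> T \<longleftrightarrow> S \<subseteq> T"
proof -
  have "foldr And xs Top \<in> T \<longleftrightarrow> set xs \<subseteq> T" for xs
    by (induction xs) (simp_all add: prime_theory_And prime_theory_Top assms(2))
  then show ?thesis unfolding big_conj_def by (simp add: set_some_list[OF assms(1)])
qed

lemma big_disj_mem:
  assumes "finite S" "prime_theory T"
  shows "big_disj S \<in> T \<longleftrightarrow> (\<exists>a\<in>S. a \<in> T)"
proof -
  have "foldr Or xs Bot \<in> T \<longleftrightarrow> (\<exists>a\<in>set xs. a \<in> T)" for xs
    by (induction xs) (simp_all add: prime_theory_Or prime_theory_Bot assms(2))
  then show ?thesis unfolding big_disj_def by (simp add: set_some_list[OF assms(1)])
qed

lemma big_disj_empty: "big_disj {} = Bot"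
  using set_some_list[of "{}"] by (simp add: big_disj_def)

definition next_part :: "fm set \<Rightarrow> fm set" where
  "next_part T = {a. Next a \<in> T}"

lemma derives_next_part: "derives (next_part T) a \<Longrightarrow> prime_theory T \<Longrightarrow> Next a \<in> T"
proof (induction rule: derives.induct)
  case (assm a)
  then show ?case by (simp add: next_part_def)
next
  case (ax a)
  then show ?case using prime_theory_prov prov.nec by blast
next
  case (mp a b)
  then show ?case using prime_theory_prov_mp[OF _ prov.next_imp] prime_theory_mp by blast
qed

lemma prime_theory_next_part:
  assumes "prime_theory T"
  shows "prime_theory (next_part T)"
  unfolding prime_theory_def
proof (intro conjI allI impI)
  show "a \<in> next_part T" if "derives (next_part T) a" for a
    using derives_next_part[OF that assms] by (simp add: next_part_def)
  show "Bot \<notin> next_part T"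
    using prime_theory_prov_mp[OF assms prov.next_bot[unfolded Neg_def]] prime_theory_Bot[OF assms]
    by (auto simp: next_part_def)
  show "a \<in> next_part T \<or> b \<in> next_part T" if "Or a b \<in> next_part T" for a b
    using that prime_theory_prov_mp[OF assms prov.next_or] prime_theory_Or[OF assms]
    by (simp add: next_part_def)
qed

text \<open>The left-to-right direction uses the induction rule for \<open>Dia\<close>: the disjunction
  \<open>a \<or> \<circle>\<Diamond>a\<close> is itself a pre-fixed point of \<open>\<circle>\<close>.\<close>

lemma prime_theory_Dia:
  assumes "prime_theory T"
  shows "Dia a \<in> T \<longleftrightarrow> a \<in> T \<or> Next (Dia a) \<in> T"
proof
  show "a \<in> T \<or> Next (Dia a) \<in> T \<Longrightarrow> Dia a \<in> T"
    using prime_theory_prov_mp[OF assms prov.dia_fix] prime_theory_Or[OF assms] by blast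
next
  define c where "c = Or a (Next (Dia a))"
  have unfold: "Dia a \<in> T'" if "prime_theory T'" "a \<in> T' \<or> Next (Dia a) \<in> T'" for T'
    using that prime_theory_prov_mp[OF _ prov.dia_fix] prime_theory_Or by blast
  have "prov (Imp (Next c) c)"
  proof (rule prov_ImpI_prime_theory)
    fix T' assume T': "prime_theory T'" "Next c \<in> T'"
    then have "a \<in> next_part T' \<or> Next (Dia a) \<in> next_part T'"
      using prime_theory_Or[OF prime_theory_next_part] by (simp add: c_def next_part_def)
    then have "Dia a \<in> next_part T'"
      using unfold prime_theory_next_part[OF T'(1)] by blast
    then show "c \<in> T'" using prime_theory_Or[OF T'(1)] by (simp add: c_def next_part_def)
  qed
  moreover have "prov (Imp (Dia a) (Dia c))"
    by (intro prov.dia_mono prov_ImpI_prime_theory) (simp add: c_def prime_theory_Or)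
  moreover assume "Dia a \<in> T"
  ultimately have "c \<in> T" using prime_theory_prov_mp[OF assms] prov.dia_ind by blast
  then show "a \<in> T \<or> Next (Dia a) \<in> T" using prime_theory_Or[OF assms] by (simp add: c_def)
qed

definition canonical_model :: "(fm set \<times> fm set) frame" where
  "canonical_model =
     \<lparr>carrier = {G. prime_theory (snd G) \<and> fst G = - snd G},
      leq = (\<lambda>G H. snd G \<subseteq> snd H),
      lab = (\<lambda>G. G),
      succ = (\<lambda>G H. prime_theory (snd G) \<and> fst G = - snd G \<and>
                    H = (- next_part (snd G), next_part (snd G)))\<rparr>"

lemma canonical_model_simps:
  "G \<in> carrier canonical_model \<longleftrightarrow> prime_theory (snd G) \<and> fst G = - snd G"
  "leq canonical_model G H \<longleftrightarrow> snd G \<subseteq> snd H"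
  "lab canonical_model G = G"
  "succ canonical_model G H \<longleftrightarrow> G \<in> carrier canonical_model \<and>
     H = (- next_part (snd G), next_part (snd G))"
  unfolding canonical_model_def by auto

lemma deterministic_canonical_model: "deterministic canonical_model"
  by (auto simp: deterministic_def canonical_model_simps)

lemma prime_theory_is_type:
  assumes "prime_theory T"
  shows "is_type UNIV (- T, T)"
  unfolding is_type_def Let_def fst_conv snd_conv
proof (intro conjI allI impI)
  show "Bot \<notin> T" using prime_theory_Bot[OF assms] .
  fix a b
  show "And a b \<in> T \<longleftrightarrow> a \<in> T \<and> b \<in> T" using prime_theory_And[OF assms] .
  show "Or a b \<in> T \<longleftrightarrow> a \<in> T \<or> b \<in> T" using prime_theory_Or[OF assms] .
  show "a \<in> - T \<or> b \<in> T" if "Imp a b \<in> T"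
    using prime_theory_mp[OF assms that] by blast
next
  fix a assume "Dia a \<in> - T"
  then show "a \<in> - T" using prime_theory_Dia[OF assms] by blast
qed auto

lemma labelled_frame_canonical_model: "labelled_frame UNIV canonical_model"
  unfolding labelled_frame_def
proof (intro conjI ballI allI impI)
  fix G a b
  assume "G \<in> carrier canonical_model" "Imp a b \<in> fst (lab canonical_model G)"
  then have "prime_theory (snd G)" "Imp a b \<notin> snd G"
    by (auto simp: canonical_model_simps)
  then obtain T where "snd G \<subseteq> T" "prime_theory T" "a \<in> T" "b \<notin> T"
    using prime_theory_Imp_counterexample by blast
  then show "\<exists>H\<in>carrier canonical_model. leq canonical_model G H \<and>
      a \<in> snd (lab canonical_model H) \<and> b \<in> fst (lab canonical_model H)"
    by (intro bexI[of _ "(- T, T)"]) (auto simp: canonical_model_simps)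
next
  fix G assume "G \<in> carrier canonical_model"
  then have "G = (- snd G, snd G)" "prime_theory (snd G)"
    by (auto simp: canonical_model_simps prod_eq_iff)
  then show "is_type UNIV (lab canonical_model G)"
    using prime_theory_is_type by (metis canonical_model_simps(3))
qed (auto simp: canonical_model_simps type_le_def prod_eq_iff)

lemma weak_quasimodel_canonical_model: "weak_quasimodel UNIV canonical_model"
proof -
  have "G \<in> carrier canonical_model \<and> H \<in> carrier canonical_model"
    if "succ canonical_model G H" for G H
    using that prime_theory_next_part by (auto simp: canonical_model_simps)
  moreover have "\<exists>H'\<in>carrier canonical_model. leq canonical_model H H' \<and> succ canonical_model G' H'"
    if "G' \<in> carrier canonical_model" "leq canonical_model G G'" "succ canonical_model G H"
    for G G' H
    using that prime_theory_next_part
    by (intro bexI[of _ "(- next_part (snd G'), next_part (snd G'))"])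
      (auto simp: canonical_model_simps next_part_def)
  moreover have "type_S (lab canonical_model G) (lab canonical_model H)"
    if "succ canonical_model G H" for G H
  proof -
    from that have "prime_theory (snd G)" "fst G = - snd G"
      and H: "H = (- next_part (snd G), next_part (snd G))"
      by (auto simp: canonical_model_simps)
    then show ?thesis
      using prime_theory_Dia[of "snd G"]
      unfolding type_S_def canonical_model_simps H by (auto simp: next_part_def)
  qed
  ultimately show ?thesis
    unfolding weak_quasimodel_def using labelled_frame_canonical_model by blast
qed

definition strict_upset :: "'w frame \<Rightarrow> 'w \<Rightarrow> 'w set" where
  "strict_upset F w = {v \<in> carrier F. leq F w v \<and> v \<noteq> w}"

lemma sim_fuel_Suc:
  "sim_fuel F (Suc n) w = Imp (big_conj (snd (lab F w)))
     (Or (big_disj (fst (lab F w))) (big_disj (sim_fuel F n ` strict_upset F w)))"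
  by (simp add: strict_upset_def)

declare sim_fuel.simps(2) [simp del]

lemma card_strict_upset_less_card:
  "finite (carrier F) \<Longrightarrow> w \<in> carrier F \<Longrightarrow> card (strict_upset F w) < card (carrier F)"
  unfolding strict_upset_def by (rule psubset_card_mono) auto

lemma card_strict_upset_less:
  assumes "labelled_frame \<Sigma> F" "finite (carrier F)" "w \<in> carrier F" "v \<in> strict_upset F w"
  shows "card (strict_upset F v) < card (strict_upset F w)"
proof (rule psubset_card_mono)
  show "finite (strict_upset F w)"
    using assms(2) by (simp add: strict_upset_def)
  have v: "v \<in> carrier F" "leq F w v" "v \<noteq> w"
    using assms(4) by (auto simp: strict_upset_def)
  have "x \<in> strict_upset F w" if "x \<in> strict_upset F v" for x
  proof -
    from that have x: "x \<in> carrier F" "leq F v x" "x \<noteq> v"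
      by (auto simp: strict_upset_def)
    with v assms(1,3) have "leq F w x" "x \<noteq> w"
      unfolding labelled_frame_def by blast+
    with x show ?thesis by (simp add: strict_upset_def)
  qed
  moreover have "v \<notin> strict_upset F v" by (simp add: strict_upset_def)
  ultimately show "strict_upset F v \<subset> strict_upset F w"
    using assms(4) by blast
qed

lemma sim_fuel_stable:
  assumes "labelled_frame \<Sigma> F" "finite (carrier F)"
  shows "w \<in> carrier F \<Longrightarrow> card (strict_upset F w) \<le> n \<Longrightarrow>
    sim_fuel F n w = sim_fuel F (card (strict_upset F w)) w"
proof (induction n arbitrary: w rule: less_induct)
  case (less n w)
  show ?case
  proof (cases "strict_upset F w = {}")
    case True
    then show ?thesis
      by (cases n) (simp_all only: sim_fuel_Suc image_empty big_disj_empty sim_fuel.simps(1) card.empty)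
  next
    case False
    then obtain k where k: "card (strict_upset F w) = Suc k"
      using assms(2) by (cases "card (strict_upset F w)") (auto simp: strict_upset_def)
    with less.prems obtain m where m: "n = Suc m" "k \<le> m"
      by (cases n) auto
    have "sim_fuel F m v = sim_fuel F k v" if "v \<in> strict_upset F w" for v
    proof -
      have "v \<in> carrier F" using that by (simp add: strict_upset_def)
      moreover have "card (strict_upset F v) \<le> k"
        using card_strict_upset_less[OF assms less.prems(1) that] k by simp
      ultimately show ?thesis
        using less.IH[of m v] less.IH[of k v] m by simp
    qed
    then have "sim_fuel F m ` strict_upset F w = sim_fuel F k ` strict_upset F w"
      by (rule image_cong[OF refl])
    then show ?thesis
      unfolding k m(1) sim_fuel_Suc by simp
  qed
qed

lemma Sim_unfold:
  assumes "labelled_frame \<Sigma> F" "finite (carrier F)" "w \<in> carrier F"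
  shows "Sim F w = Imp (big_conj (snd (lab F w)))
     (Or (big_disj (fst (lab F w))) (big_disj (Sim F ` strict_upset F w)))"
proof -
  obtain N where N: "card (carrier F) = Suc N"
    using card_strict_upset_less_card[OF assms(2,3)] by (cases "card (carrier F)") auto
  have "sim_fuel F N v = Sim F v" if "v \<in> strict_upset F w" for v
  proof -
    have v: "v \<in> carrier F" using that by (simp add: strict_upset_def)
    then have "card (strict_upset F v) \<le> N"
      using card_strict_upset_less_card[OF assms(2) v] N by simp
    then show ?thesis
      using sim_fuel_stable[OF assms(1,2) v, of N] sim_fuel_stable[OF assms(1,2) v, of "Suc N"]
      by (simp add: Sim_def N)
  qed
  then have "sim_fuel F N ` strict_upset F w = Sim F ` strict_upset F w"
    by (rule image_cong[OF refl])
  then show ?thesis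
    unfolding Sim_def[of F w] N sim_fuel_Suc by simp
qed

lemma lab_partition:
  "labelled_frame \<Sigma> F \<Longrightarrow> w \<in> carrier F \<Longrightarrow> fst (lab F w) \<union> snd (lab F w) = \<Sigma>"
  unfolding labelled_frame_def is_type_def Let_def by blast

lemma Sim_mem_prime_theoryD:
  assumes "finite \<Sigma>" "labelled_frame \<Sigma> F" "finite (carrier F)" "w \<in> carrier F"
    and T: "prime_theory T" "Sim F w \<in> T" "snd (lab F w) \<subseteq> T"
  shows "(\<exists>a\<in>fst (lab F w). a \<in> T) \<or> (\<exists>v\<in>strict_upset F w. Sim F v \<in> T)"
proof -
  have fin: "finite (fst (lab F w))" "finite (snd (lab F w))"
    "finite (Sim F ` strict_upset F w)"
    using lab_partition[OF assms(2,4)] assms(1,3) by (auto simp: strict_upset_def)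
  have "big_conj (snd (lab F w)) \<in> T"
    using big_conj_mem[OF fin(2) T(1)] T(3) by simp
  with T(1,2) have "Or (big_disj (fst (lab F w))) (big_disj (Sim F ` strict_upset F w)) \<in> T"
    using prime_theory_mp unfolding Sim_unfold[OF assms(2-4)] by blast
  then show ?thesis
    by (simp add: prime_theory_Or[OF T(1)] big_disj_mem[OF fin(1) T(1)] big_disj_mem[OF fin(3) T(1)])
qed

lemma Sim_not_mem_prime_theory_extend:
  assumes "finite \<Sigma>" "labelled_frame \<Sigma> F" "finite (carrier F)" "w \<in> carrier F"
    and T: "prime_theory T" "Sim F w \<notin> T"
  shows "\<exists>T'. T \<subseteq> T' \<and> prime_theory T' \<and> snd (lab F w) \<subseteq> T' \<and>
    fst (lab F w) \<inter> T' = {} \<and> (\<forall>v\<in>strict_upset F w. Sim F v \<notin> T')"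
proof -
  have fin: "finite (fst (lab F w))" "finite (snd (lab F w))"
    "finite (Sim F ` strict_upset F w)"
    using lab_partition[OF assms(2,4)] assms(1,3) by (auto simp: strict_upset_def)
  obtain T' where T': "T \<subseteq> T'" "prime_theory T'" "big_conj (snd (lab F w)) \<in> T'"
    "Or (big_disj (fst (lab F w))) (big_disj (Sim F ` strict_upset F w)) \<notin> T'"
    using prime_theory_Imp_counterexample[OF T(1)] T(2)
    unfolding Sim_unfold[OF assms(2-4)] by blast
  then show ?thesis
    by (intro exI[of _ T'])
      (auto simp: big_conj_mem[OF fin(2)] prime_theory_Or big_disj_mem[OF fin(1)]
        big_disj_mem[OF fin(3)])
qed

text \<open>A simulation into the canonical model refutes \<open>Sim\<close>: the formula would otherwise
  have to be witnessed by a strictly larger point, and forward confluence transports the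
  witness along the simulation.\<close>

lemma simulation_canonical_model_Sim_not_mem:
  assumes "finite \<Sigma>" "labelled_frame \<Sigma> F" "finite (carrier F)"
    and E: "simulation F canonical_model E"
  shows "E w G \<Longrightarrow> Sim F w \<notin> snd G"
proof (induction "card (strict_upset F w)" arbitrary: w G rule: less_induct)
  case less
  from less.prems E have "w \<in> carrier F \<and> G \<in> carrier canonical_model \<and>
      type_sub (lab F w) (lab canonical_model G)"
    unfolding simulation_def by blast
  then have w: "w \<in> carrier F"
    and G: "prime_theory (snd G)" "fst G = - snd G" and sub: "type_sub (lab F w) G"
    by (auto simp: canonical_model_simps)
  show ?case
  proof
    assume "Sim F w \<in> snd G"
    moreover have "snd (lab F w) \<subseteq> snd G" "\<forall>a\<in>fst (lab F w). a \<notin> snd G"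
      using sub G(2) by (auto simp: type_sub_def)
    ultimately obtain v where v: "v \<in> strict_upset F w" "Sim F v \<in> snd G"
      using Sim_mem_prime_theoryD[OF assms(1-3) w G(1)] by blast
    then obtain G' where G': "leq canonical_model G G'" "E v G'"
      using E less.prems unfolding simulation_def strict_upset_def by blast
    have "Sim F v \<notin> snd G'"
      using less.hyps[OF card_strict_upset_less[OF assms(2,3) w v(1)] G'(2)] .
    with v(2) G'(1) show False by (auto simp: canonical_model_simps)
  qed
qed

definition Sim_simulation :: "'w frame \<Rightarrow> 'w \<Rightarrow> fm set \<times> fm set \<Rightarrow> bool" where
  "Sim_simulation F w G \<longleftrightarrow> w \<in> carrier F \<and> G \<in> carrier canonical_model \<and>
     type_sub (lab F w) G \<and> (\<forall>v\<in>strict_upset F w. Sim F v \<notin> snd G)"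

lemma Sim_simulation_extend:
  assumes "finite \<Sigma>" "labelled_frame \<Sigma> F" "finite (carrier F)" "w \<in> carrier F"
    "prime_theory T" "Sim F w \<notin> T"
  shows "\<exists>G. T \<subseteq> snd G \<and> Sim_simulation F w G"
proof -
  obtain T' where T': "T \<subseteq> T'" "prime_theory T'" "snd (lab F w) \<subseteq> T'"
    "fst (lab F w) \<inter> T' = {}" "\<forall>v\<in>strict_upset F w. Sim F v \<notin> T'"
    using Sim_not_mem_prime_theory_extend[OF assms] by blast
  then have "Sim_simulation F w (- T', T')"
    using assms(4) by (auto simp: Sim_simulation_def canonical_model_simps type_sub_def)
  with T'(1) show ?thesis by auto
qed

lemma simulation_Sim_simulation:
  assumes "finite \<Sigma>" "labelled_frame \<Sigma> F" "finite (carrier F)"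
  shows "simulation F canonical_model (Sim_simulation F)"
proof -
  have "\<exists>G'\<in>carrier canonical_model. leq canonical_model G G' \<and> Sim_simulation F w' G'"
    if wG: "Sim_simulation F w G" and w': "w' \<in> carrier F" "leq F w w'" for w G w'
  proof (cases "w' = w")
    case True
    with wG show ?thesis
      by (intro bexI[of _ G]) (auto simp: Sim_simulation_def canonical_model_simps)
  next
    case False
    with wG w' have "prime_theory (snd G)" "Sim F w' \<notin> snd G"
      by (auto simp: Sim_simulation_def canonical_model_simps strict_upset_def)
    then obtain G' where "snd G \<subseteq> snd G'" "Sim_simulation F w' G'"
      using Sim_simulation_extend[OF assms w'(1)] by blast
    then show ?thesis
      by (intro bexI[of _ G']) (auto simp: Sim_simulation_def canonical_model_simps)
  qed
  then show ?thesis
    unfolding simulation_def by (auto simp: Sim_simulation_def canonical_model_simps)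
qed

lemma simulates_canonical_modelD:
  "simulates F canonical_model w G \<Longrightarrow>
    w \<in> carrier F \<and> prime_theory (snd G) \<and> fst G = - snd G \<and> type_sub (lab F w) G"
proof -
  assume "simulates F canonical_model w G"
  then have "w \<in> carrier F \<and> G \<in> carrier canonical_model \<and>
      type_sub (lab F w) (lab canonical_model G)"
    unfolding simulates_def simulation_def by blast
  then show ?thesis by (simp add: canonical_model_simps)
qed

lemma simulates_canonical_model_Sim_not_mem:
  assumes "finite \<Sigma>" "labelled_frame \<Sigma> F" "finite (carrier F)"
    "simulates F canonical_model w G"
  shows "Sim F w \<notin> snd G"
  using assms(4) simulation_canonical_model_Sim_not_mem[OF assms(1-3)]
  unfolding simulates_def by blast

lemma Sim_not_mem_simulates:
  assumes "finite \<Sigma>" "labelled_frame \<Sigma> F" "finite (carrier F)" "w \<in> carrier F"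
    "prime_theory T" "Sim F w \<notin> T"
  shows "\<exists>G. T \<subseteq> snd G \<and> simulates F canonical_model w G"
  using Sim_simulation_extend[OF assms] simulation_Sim_simulation[OF assms(1-3)]
  unfolding simulates_def by blast

lemma mem_subfms_self: "\<phi> \<in> subfms \<phi>"
  by (cases \<phi>) auto

lemma subfm_closed_Dia: "subfm_closed \<Sigma> \<Longrightarrow> Dia \<psi> \<in> \<Sigma> \<Longrightarrow> \<psi> \<in> \<Sigma>"
  unfolding subfm_closed_def using mem_subfms_self[of \<psi>] by fastforce

lemma is_S_path_snoc:
  assumes "is_S_path F us" "succ F (last us) v"
  shows "is_S_path F (us @ [v])"
  unfolding is_S_path_def
proof (intro conjI allI impI)
  show "us @ [v] \<noteq> []" by simp
  fix i assume i: "Suc i < length (us @ [v])"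
  have "us \<noteq> []" using assms(1) by (simp add: is_S_path_def)
  show "succ F ((us @ [v]) ! i) ((us @ [v]) ! Suc i)"
  proof (cases "Suc i < length us")
    case True
    then show ?thesis using assms(1) by (simp add: is_S_path_def nth_append)
  next
    case False
    with i have "i = length us - 1" by simp
    with assms(2) \<open>us \<noteq> []\<close> False show ?thesis by (simp add: nth_append last_conv_nth)
  qed
qed

lemma Rset_subset_carrier: "Rset F w \<subseteq> carrier F"
  by (auto simp: Rset_def Pset_def)

lemma Rset_refl: "w \<in> Pset F \<Longrightarrow> w \<in> Rset F w"
  unfolding Rset_def by (intro CollectI conjI exI[of _ "[w]"]) (auto simp: is_S_path_def)

lemma Rset_succ_closed: "\<forall>u\<in>Rset F w. \<forall>v. succ F u v \<longrightarrow> v \<in> Pset F \<longrightarrow> v \<in> Rset F w"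
proof (intro ballI allI impI)
  fix u v assume "u \<in> Rset F w" "succ F u v" "v \<in> Pset F"
  moreover obtain us where us: "is_S_path F us" "hd us = w" "last us = u" "set us \<subseteq> Pset F"
    using \<open>u \<in> Rset F w\<close> by (auto simp: Rset_def)
  moreover have "us \<noteq> []"
    using us(1) by (simp add: is_S_path_def)
  ultimately show "v \<in> Rset F w"
    unfolding Rset_def by (intro CollectI conjI exI[of _ "us @ [v]"]) (auto intro: is_S_path_snoc)
qed

lemma simulates_canonical_model_Pset:
  assumes "finite \<Sigma>" "labelled_frame \<Sigma> F" "finite (carrier F)"
    "simulates F canonical_model w G"
  shows "w \<in> Pset F"
  using simulates_canonical_modelD[OF assms(4)] prime_theory_prov
    simulates_canonical_model_Sim_not_mem[OF assms]
  unfolding Pset_def by blast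

lemma prov_Imp_big_conj_Sim:
  assumes "finite \<Sigma>" "labelled_frame \<Sigma> F" "finite (carrier F)" "R \<subseteq> carrier F"
    and "\<psi> \<in> \<Sigma>" "\<forall>u\<in>R. \<psi> \<notin> snd (lab F u)"
  shows "prov (Imp \<psi> (big_conj (Sim F ` R)))"
proof (rule prov_ImpI_prime_theory)
  fix T assume T: "prime_theory T" "\<psi> \<in> T"
  have "Sim F u \<in> T" if u: "u \<in> R" for u
  proof (rule ccontr)
    assume "Sim F u \<notin> T"
    then obtain G where G: "T \<subseteq> snd G" "simulates F canonical_model u G"
      using Sim_not_mem_simulates[OF assms(1-3) _ T(1)] u assms(4) by blast
    then have "\<psi> \<notin> fst (lab F u)"
      using simulates_canonical_modelD[OF G(2)] T(2) by (auto simp: type_sub_def)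
    then have "\<psi> \<in> snd (lab F u)"
      using lab_partition[OF assms(2)] u assms(4,5) by blast
    with u assms(6) show False by blast
  qed
  moreover have "finite (Sim F ` R)"
    using assms(3,4) finite_subset by blast
  ultimately show "big_conj (Sim F ` R) \<in> T"
    using big_conj_mem T(1) by blast
qed

lemma prov_Next_big_conj_Sim:
  assumes "finite \<Sigma>" "labelled_frame \<Sigma> F" "finite (carrier F)" "R \<subseteq> carrier F"
    and dyn: "dynamic F canonical_model (simulates F canonical_model)"
    and closed: "\<forall>u\<in>R. \<forall>v. succ F u v \<longrightarrow> v \<in> Pset F \<longrightarrow> v \<in> R"
  shows "prov (Imp (Next (big_conj (Sim F ` R))) (big_conj (Sim F ` R)))"
proof (rule prov_ImpI_prime_theory)
  have fin: "finite (Sim F ` R)"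
    using assms(3,4) finite_subset by blast
  fix T assume T: "prime_theory T" "Next (big_conj (Sim F ` R)) \<in> T"
  have "Sim F u \<in> T" if u: "u \<in> R" for u
  proof (rule ccontr)
    assume "Sim F u \<notin> T"
    then obtain G where G: "T \<subseteq> snd G" "simulates F canonical_model u G"
      using Sim_not_mem_simulates[OF assms(1-3) _ T(1)] u assms(4) by blast
    define H where "H = (- next_part (snd G), next_part (snd G))"
    have "succ canonical_model G H"
      using simulates_canonical_modelD[OF G(2)] by (simp add: H_def canonical_model_simps)
    then obtain v where v: "succ F u v" "simulates F canonical_model v H"
      using dyn G(2) unfolding dynamic_def by blast
    have "v \<in> R"
      using closed u v(1) simulates_canonical_model_Pset[OF assms(1-3) v(2)] by blast
    moreover have "prime_theory (snd H)" "big_conj (Sim F ` R) \<in> snd H"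
      using simulates_canonical_modelD[OF v(2)] T(2) G(1) by (auto simp: H_def next_part_def)
    ultimately have "Sim F v \<in> snd H"
      using big_conj_mem[OF fin] by blast
    with simulates_canonical_model_Sim_not_mem[OF assms(1-3) v(2)] show False ..
  qed
  then show "big_conj (Sim F ` R) \<in> T"
    using big_conj_mem[OF fin T(1)] by blast
qed

lemma prov_Dia_Imp_big_conj_Sim:
  assumes "finite \<Sigma>" "labelled_frame \<Sigma> F" "finite (carrier F)" "R \<subseteq> carrier F"
    and "dynamic F canonical_model (simulates F canonical_model)"
    and "\<forall>u\<in>R. \<forall>v. succ F u v \<longrightarrow> v \<in> Pset F \<longrightarrow> v \<in> R"
    and "\<psi> \<in> \<Sigma>" "\<forall>u\<in>R. \<psi> \<notin> snd (lab F u)"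
  shows "prov (Imp (Dia \<psi>) (big_conj (Sim F ` R)))"
proof (rule prov_ImpI_prime_theory)
  fix T assume T: "prime_theory T" "Dia \<psi> \<in> T"
  then have "Dia (big_conj (Sim F ` R)) \<in> T"
    using prime_theory_prov_mp prov.dia_mono[OF prov_Imp_big_conj_Sim[OF assms(1-4,7,8)]]
    by blast
  with T(1) show "big_conj (Sim F ` R) \<in> T"
    using prime_theory_prov_mp prov.dia_ind[OF prov_Next_big_conj_Sim[OF assms(1-6)]]
    by blast
qed

theorem proposition7p3:
  fixes \<Sigma> :: "fm set" and I :: "'w frame" and w :: 'w and \<psi> :: fm
  assumes "finite \<Sigma>" and "subfm_closed \<Sigma>"
    and "weak_quasimodel \<Sigma> I" and "finite (carrier I)"
    and "\<forall>A :: (fm set \<times> fm set) frame. weak_quasimodel UNIV A \<and> deterministic A \<longrightarrow>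
           simulation I A (simulates I A) \<and> dynamic I A (simulates I A) \<and>
           surjective I A (simulates I A)"
    and "w \<in> Pset I" and "Dia \<psi> \<in> snd (lab I w)"
  shows "\<exists>v\<in>Rset I w. \<psi> \<in> snd (lab I v)"
proof (rule ccontr)
  assume "\<not> ?thesis"
  have lf: "labelled_frame \<Sigma> I"
    using assms(3) by (simp add: weak_quasimodel_def)
  have dyn: "dynamic I canonical_model (simulates I canonical_model)"
    using assms(5) weak_quasimodel_canonical_model deterministic_canonical_model by blast
  have w: "w \<in> carrier I" "\<not> prov (Sim I w)"
    using assms(6) by (auto simp: Pset_def)
  have "\<psi> \<in> \<Sigma>"
    using subfm_closed_Dia[OF assms(2)] lab_partition[OF lf w(1)] assms(7) by blast
  with \<open>\<not> ?thesis\<close> have \<chi>: "prov (Imp (Dia \<psi>) (big_conj (Sim I ` Rset I w)))"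
    using prov_Dia_Imp_big_conj_Sim[OF assms(1) lf assms(4) Rset_subset_carrier dyn
        Rset_succ_closed]
    by blast
  obtain G where G: "simulates I canonical_model w G"
    using unprovable_prime_theory[OF w(2)] Sim_not_mem_simulates[OF assms(1) lf assms(4) w(1)]
    by blast
  note G' = simulates_canonical_modelD[OF G]
  have "Dia \<psi> \<in> snd G"
    using G' assms(7) by (auto simp: type_sub_def)
  then have "Sim I ` Rset I w \<subseteq> snd G"
    using prime_theory_prov_mp[OF _ \<chi>] G' big_conj_mem assms(4) Rset_subset_carrier
    by (meson finite_imageI finite_subset)
  then have "Sim I w \<in> snd G"
    using Rset_refl[OF assms(6)] by blast
  with simulates_canonical_model_Sim_not_mem[OF assms(1) lf assms(4) G] show False ..
qed

end
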